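(* Let $E\colon(0,1]\to\mathbb{R}$ be given by $E(\delta):=\big((\lfloor\delta^{-1}\rfloor+1)\delta-1\big)\log\lfloor\delta^{-1}\rfloor+\big(1-\lfloor\delta^{-1}\rfloor\delta\big)\log\big(\lfloor\delta^{-1}\rfloor+1\big)$ (base-2 logarithms, so $E(1)=0$). For every real $a\ge 0$ and every integer $t\ge 3$, the maximum of $E(\delta)-a\delta$ over $\delta\in[1/t,1]$ is attained at $\delta=1/s$ for some $s\in\{3,4,\dots,t\}$.
   Context: Logarithms are base 2. *)

theory Defs
  imports Complex_Main
begin

definition E :: "real \<Rightarrow> real" where
  "E \<delta> = (let m = real_of_int \<lfloor>1 / \<delta>\<rfloor> in
     ((m + 1) * \<delta> - 1) * log 2 m + (1 - m * \<delta>) * log 2 (m + 1))"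

end

theory Submission
  imports Defs
begin

text \<open>With \<open>m = \<lfloor>1/\<delta>\<rfloor>\<close>, both \<open>E\<close> and \<open>\<delta>\<close> are the same convex combination of their values
at the nodes \<open>1/m\<close> and \<open>1/(m+1)\<close>, so \<open>E \<delta> - a \<delta>\<close> is the linear interpolation of the node
values \<open>f k = (log k - a)/k\<close>. Hence its maximum on \<open>[1/t, 1]\<close> is \<open>max {f k | 1 \<le> k \<le> t}\<close>, and
for \<open>a \<ge> 0\<close> the nodes \<open>k = 1, 2\<close> never beat \<open>k = 3\<close> because \<open>log 3 / 3 \<ge> 1/2\<close>.\<close>

lemma E_inverse_nat:
  assumes "n \<ge> (1::nat)"
  shows "E (1 / real n) = log 2 (real n) / real n"
  using assms unfolding E_def Let_def by (simp add: field_simps)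

lemma floor_inverse_bounds:
  fixes \<delta> :: real
  assumes "0 < \<delta>" "\<delta> \<le> 1"
  defines "m \<equiv> nat \<lfloor>1 / \<delta>\<rfloor>"
  shows "1 \<le> m" and "real m * \<delta> \<le> 1" and "1 < (real m + 1) * \<delta>"
proof -
  have floor_pos: "1 \<le> \<lfloor>1 / \<delta>\<rfloor>"
    using assms(1,2) by (simp add: le_floor_iff field_simps)
  then show "1 \<le> m"
    unfolding m_def by linarith
  have m_eq: "real m = of_int \<lfloor>1 / \<delta>\<rfloor>"
    unfolding m_def using floor_pos by (intro of_nat_nat) linarith
  show "real m * \<delta> \<le> 1"
  proof -
    have "of_int \<lfloor>1 / \<delta>\<rfloor> * \<delta> \<le> (1 / \<delta>) * \<delta>"
      using assms(1) by (intro mult_right_mono of_int_floor_le) simp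
    then show ?thesis using assms(1) by (simp add: m_eq)
  qed
  show "1 < (real m + 1) * \<delta>"
    using real_of_int_floor_add_one_gt[of "1 / \<delta>"] assms(1) by (simp add: m_eq field_simps)
qed

lemma E_interpolates_nodes:
  fixes \<delta> :: real and m :: nat
  assumes "1 \<le> m"
  defines "w \<equiv> (real m + 1) * (1 - real m * \<delta>)"
  assumes "\<lfloor>1 / \<delta>\<rfloor> = int m"
  shows "E \<delta> = (1 - w) * E (1 / real m) + w * E (1 / real (m + 1))"
    and "\<delta> = (1 - w) * (1 / real m) + w * (1 / real (m + 1))"
proof -
  have m_pos: "real m > 0" using assms(1) by simp
  have E_\<delta>: "E \<delta> = ((real m + 1) * \<delta> - 1) * log 2 (real m) + (1 - real m * \<delta>) * log 2 (real m + 1)"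
    unfolding E_def Let_def assms(3) by simp
  have E_m: "E (1 / real m) = log 2 (real m) / real m"
    using E_inverse_nat assms(1) by blast
  have E_Suc_m: "E (1 / real (m + 1)) = log 2 (real m + 1) / (real m + 1)"
    using E_inverse_nat[of "m + 1"] by (simp add: add.commute)
  have one_minus_w: "1 - w = real m * ((real m + 1) * \<delta> - 1)"
    unfolding w_def by (simp add: algebra_simps)
  then have "(1 - w) * E (1 / real m) = ((real m + 1) * \<delta> - 1) * log 2 (real m)"
    using m_pos by (simp add: E_m)
  moreover have "w * E (1 / real (m + 1)) = (1 - real m * \<delta>) * log 2 (real m + 1)"
    unfolding E_Suc_m w_def by (simp add: add_pos_pos)
  ultimately show "E \<delta> = (1 - w) * E (1 / real m) + w * E (1 / real (m + 1))"
    unfolding E_\<delta> by simp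
  have "(1 - w) * (1 / real m) = (real m + 1) * \<delta> - 1"
    using one_minus_w m_pos by simp
  moreover have "w * (1 / real (m + 1)) = 1 - real m * \<delta>"
    unfolding w_def by (simp add: add.commute)
  ultimately show "\<delta> = (1 - w) * (1 / real m) + w * (1 / real (m + 1))"
    by (simp add: algebra_simps)
qed

lemma log2_3_ge: "log 2 (3::real) \<ge> 3/2"
proof -
  have "3 = log 2 (8::real)"
    using log_nat_power[of 2 2 3] by simp
  also have "\<dots> \<le> log 2 9" by simp
  also have "\<dots> = 2 * log 2 3"
    using log_nat_power[of 3 2 2] by simp
  finally show ?thesis by simp
qed

lemma small_nodes_dominated:
  fixes a :: real
  assumes "a \<ge> 0" "k \<in> {1, 2::nat}"
  shows "E (1 / real k) - a * (1 / real k) \<le> E (1 / 3) - a * (1 / 3)"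
proof -
  have "E 1 = 0" "E (1 / 2) = 1 / 2" "E (1 / 3) = log 2 3 / 3"
    using E_inverse_nat[of 1] E_inverse_nat[of 2] E_inverse_nat[of 3] by simp_all
  then show ?thesis
    using assms log2_3_ge by auto
qed

lemma node_maximum_beyond_2:
  fixes a :: real and t :: nat
  assumes "a \<ge> 0" "t \<ge> 3"
  defines "f \<equiv> \<lambda>k::nat. E (1 / real k) - a * (1 / real k)"
  shows "\<exists>s\<in>{3..t}. \<forall>k\<in>{1..t}. f k \<le> f s"
proof -
  obtain s where s: "s \<in> {3..t}" "f s = Max (f ` {3..t})"
    using Max_in[of "f ` {3..t}"] assms(2) by fastforce
  have large_nodes: "f k \<le> f s" if "k \<in> {3..t}" for k
    using s(2) Max_ge[of "f ` {3..t}" "f k"] that by simp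
  have "f k \<le> f s" if "k \<in> {1..t}" for k
  proof (cases "k \<le> 2")
    case True
    then have "k \<in> {1, 2}"
      using that by auto
    then have "f k \<le> f 3"
      unfolding f_def using small_nodes_dominated[OF assms(1)] by simp
    then show ?thesis
      using large_nodes[of 3] assms(2) by simp
  next
    case False
    then show ?thesis
      using large_nodes that by simp
  qed
  then show ?thesis
    using s(1) by blast
qed

lemma E_minus_linear_le_node_bound:
  fixes a \<delta> M :: real and t :: nat
  assumes "1 / real t \<le> \<delta>" "\<delta> \<le> 1" "1 \<le> t"
    and nodes: "\<And>k. 1 \<le> k \<Longrightarrow> k \<le> t \<Longrightarrow> E (1 / real k) - a * (1 / real k) \<le> M"
  shows "E \<delta> - a * \<delta> \<le> M"
proof -
  define f where "f k = E (1 / real k) - a * (1 / real k)" for k :: nat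
  have "0 < 1 / real t"
    using assms(3) by simp
  then have \<delta>_pos: "0 < \<delta>"
    using assms(1) by linarith
  define m where "m = nat \<lfloor>1 / \<delta>\<rfloor>"
  define w where "w = (real m + 1) * (1 - real m * \<delta>)"
  note bounds = floor_inverse_bounds[OF \<delta>_pos assms(2), folded m_def]
  have floor_eq: "\<lfloor>1 / \<delta>\<rfloor> = int m"
    using bounds(1) unfolding m_def by linarith
  have "real m * (1 / real t) \<le> 1"
    using bounds(2) assms(1) by (metis mult_left_mono of_nat_0_le_iff order_trans)
  then have m_le_t: "m \<le> t"
    using assms(3) by (simp add: field_simps)
  have w_nonneg: "0 \<le> w"
    unfolding w_def using bounds(2) by simp
  have "real m * 1 \<le> real m * ((real m + 1) * \<delta>)"
    using bounds(3) by (intro mult_left_mono) simp_all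
  then have w_le_1: "w \<le> 1"
    unfolding w_def by (simp add: algebra_simps)
  note interpolation = E_interpolates_nodes[OF bounds(1) floor_eq, folded w_def]
  have "E \<delta> - a * \<delta>
      = (1 - w) * E (1 / real m) + w * E (1 / real (m + 1))
        - a * ((1 - w) * (1 / real m) + w * (1 / real (m + 1)))"
    unfolding interpolation(1) by (subst interpolation(2)) (rule refl)
  also have "\<dots> = (1 - w) * f m + w * f (m + 1)"
    by (simp add: f_def algebra_simps)
  also have "\<dots> \<le> M"
  proof (cases "m < t")
    case True
    have "f m \<le> M" "f (m + 1) \<le> M"
      unfolding f_def using nodes[of m] nodes[of "m + 1"] bounds(1) True by simp_all
    then show ?thesis
      using convex_bound_le[of "f m" M "f (m + 1)" "1 - w" w] w_nonneg w_le_1 by simp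
  next
    case False
    then have "m = t" using m_le_t by simp
    then have "w = 0"
      using bounds(2) assms(1,3) by (simp add: w_def field_simps)
    moreover have "f m \<le> M"
      unfolding f_def using nodes bounds(1) m_le_t by simp
    ultimately show ?thesis by simp
  qed
  finally show ?thesis .
qed

theorem corollary1:
  fixes a :: real and t :: nat
  assumes "a \<ge> 0" and "t \<ge> 3"
  shows "\<exists>s::nat. 3 \<le> s \<and> s \<le> t \<and>
           (\<forall>\<delta>\<in>{1 / real t..1}. E \<delta> - a * \<delta> \<le> E (1 / real s) - a * (1 / real s))"
proof -
  obtain s where s: "s \<in> {3..t}"
    and nodes: "\<And>k. k \<in> {1..t} \<Longrightarrow>
                  E (1 / real k) - a * (1 / real k) \<le> E (1 / real s) - a * (1 / real s)"
    using node_maximum_beyond_2[OF assms] by blast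
  have "E \<delta> - a * \<delta> \<le> E (1 / real s) - a * (1 / real s)" if "\<delta> \<in> {1 / real t..1}" for \<delta>
    using that assms(2) nodes by (intro E_minus_linear_le_node_bound[of t \<delta>]) auto
  with s show ?thesis
    by auto
qed

end
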